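(* Let $\mathrm{M}$ be a loopless matroid on a finite set $E$, $\mathcal{G}$ a building set of its lattice of flats $\mathcal{L}$, $\mathcal{M}$ an atom-free $\mathcal{G}$-compatible modular cut of $\mathcal{L}$, and $e\notin E$. Then \[ \mathrm{Tr}_{\mathcal{M}}(\mathcal{G})=(\mathcal{G}\cup_{\mathcal{M}}e)/e. \] In particular, $\mathrm{Tr}_{\mathcal{M}}(\mathcal{G})$ is a building set of $\mathrm{Tr}_{\mathcal{M}}(\mathrm{M})$.
   Context: Flats ordered by inclusion, $\hat0=\varnothing$, $F\vee G=\operatorname{cl}(F\cup G)$. A building set of a geometric lattice $\mathcal{L}$ is $\mathcal{G}\subseteq\mathcal{L}\setminus\{\hat0\}$ such that for each $F\neq\hat0$ the join map $\prod_{G\in\max\mathcal{G}_{\leqslant F}}[\hat0,G]\to[\hat0,F]$ is a poset isomorphism. A modular cut is an upward-closed set $\mathcal{M}$ of flats with $F\cap G\in\mathcal{M}$ whenever $F,G\in\mathcal{M}$ satisfy $\operatorname{rk}(F\vee G)+\operatorname{rk}(F\cap G)=\operatorname{rk}F+\operatorname{rk}G$; atom-free means it contains no rank-one flat; $\mathcal{G}$-compatible means its minimal elements lie in $\mathcal{G}$. The extension $\mathrm{M}\cup_{\mathcal{M}}e$ on $E\sqcup\{e\}$ has rank $\operatorname{rk}(S)=\operatorname{rk}_{\mathrm{M}}(S)$ and $\operatorname{rk}(S\sqcup\{e\})=\operatorname{rk}_{\mathrm{M}}(S)$ if $\operatorname{cl}_{\mathrm{M}}(S)\in\mathcal{M}$,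 else $\operatorname{rk}_{\mathrm{M}}(S)+1$ ($S\subseteq E$); $\mathcal{G}\cup_{\mathcal{M}}e=\{\operatorname{cl}_{\mathrm{M}\cup_{\mathcal{M}}e}(G):G\in\mathcal{G}\}\sqcup\{\{e\}\}$. The truncation $\mathrm{Tr}_{\mathcal{M}}(\mathrm{M})$ is the matroid on $E$ with rank $\operatorname{rk}_{\mathrm{M}}(S)-1$ if $\operatorname{cl}_{\mathrm{M}}(S)\in\mathcal{M}$ and $\operatorname{rk}_{\mathrm{M}}(S)$ otherwise; it equals the contraction $(\mathrm{M}\cup_{\mathcal{M}}e)/e$, whose flats are the sets $H\setminus\{e\}$ for flats $H\ni e$ of $\mathrm{M}\cup_{\mathcal{M}}e$. $\mathrm{Tr}_{\mathcal{M}}(\mathcal{G})=\mathcal{G}\cap\mathcal{L}(\mathrm{Tr}_{\mathcal{M}}(\mathrm{M}))$. For a building set $\mathcal{G}'$ of $\mathrm{M}\cup_{\mathcal{M}}e$, the contraction is $\mathcal{G}'/e=\{H\setminus\{e\}: H=\operatorname{cl}(G\cup\{e\})\text{ for some }G\in\mathcal{G}',\ H\neq\operatorname{cl}(\{e\})\}$, viewed as a set of flats of $(\mathrm{M}\cup_{\mathcal{M}}e)/e=\mathrm{Tr}_{\mathcal{M}}(\mathrm{M})$. *)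

theory Defs
  imports Main "HOL-Library.FuncSet"
begin

definition matroid :: "'a set \<Rightarrow> ('a set \<Rightarrow> nat) \<Rightarrow> bool" where
  "matroid E r \<longleftrightarrow> finite E
     \<and> (\<forall>X. X \<subseteq> E \<longrightarrow> r X \<le> card X)
     \<and> (\<forall>X Y. X \<subseteq> Y \<and> Y \<subseteq> E \<longrightarrow> r X \<le> r Y)
     \<and> (\<forall>X Y. X \<subseteq> E \<and> Y \<subseteq> E \<longrightarrow> r (X \<union> Y) + r (X \<inter> Y) \<le> r X + r Y)"

definition loopless :: "'a set \<Rightarrow> ('a set \<Rightarrow> nat) \<Rightarrow> bool" where
  "loopless E r \<longleftrightarrow> (\<forall>x\<in>E. r {x} = 1)"

definition cl :: "'a set \<Rightarrow> ('a set \<Rightarrow> nat) \<Rightarrow> 'a set \<Rightarrow> 'a set" where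
  "cl E r S = {x \<in> E. r (insert x S) = r S}"

definition flat :: "'a set \<Rightarrow> ('a set \<Rightarrow> nat) \<Rightarrow> 'a set \<Rightarrow> bool" where
  "flat E r F \<longleftrightarrow> F \<subseteq> E \<and> cl E r F = F"

definition flats :: "'a set \<Rightarrow> ('a set \<Rightarrow> nat) \<Rightarrow> 'a set set" where
  "flats E r = {F. flat E r F}"

definition bot_flat :: "'a set \<Rightarrow> ('a set \<Rightarrow> nat) \<Rightarrow> 'a set" where
  "bot_flat E r = cl E r {}"

definition maxG :: "'a set set \<Rightarrow> 'a set \<Rightarrow> 'a set set" where
  "maxG \<G> F = {G \<in> \<G>. G \<subseteq> F \<and> \<not> (\<exists>G'\<in>\<G>. G' \<subseteq> F \<and> G \<subset> G')}"

definition join_map :: "'a set \<Rightarrow> ('a set \<Rightarrow> nat) \<Rightarrow> ('a set \<Rightarrow> 'a set) \<Rightarrow> 'a set set \<Rightarrow> 'a set" where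
  "join_map E r x I = cl E r (\<Union>G\<in>I. x G)"

definition building_set :: "'a set \<Rightarrow> ('a set \<Rightarrow> nat) \<Rightarrow> 'a set set \<Rightarrow> bool" where
  "building_set E r \<G> \<longleftrightarrow>
     \<G> \<subseteq> flats E r - {bot_flat E r} \<and>
     (\<forall>F\<in>flats E r. F \<noteq> bot_flat E r \<longrightarrow>
        (let I = maxG \<G> F;
             P = PiE I (\<lambda>G. {H \<in> flats E r. H \<subseteq> G})
         in bij_betw (\<lambda>x. join_map E r x I) P {H \<in> flats E r. H \<subseteq> F}
            \<and> (\<forall>x\<in>P. \<forall>y\<in>P. (\<forall>G\<in>I. x G \<subseteq> y G) \<longleftrightarrow> join_map E r x I \<subseteq> join_map E r y I)))"

definition modular_cut :: "'a set \<Rightarrow> ('a set \<Rightarrow> nat) \<Rightarrow> 'a set set \<Rightarrow> bool" where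
  "modular_cut E r \<M> \<longleftrightarrow>
     \<M> \<subseteq> flats E r \<and>
     (\<forall>F\<in>\<M>. \<forall>G\<in>flats E r. F \<subseteq> G \<longrightarrow> G \<in> \<M>) \<and>
     (\<forall>F\<in>\<M>. \<forall>G\<in>\<M>. r (cl E r (F \<union> G)) + r (F \<inter> G) = r F + r G \<longrightarrow> F \<inter> G \<in> \<M>)"

definition atom_free :: "'a set \<Rightarrow> ('a set \<Rightarrow> nat) \<Rightarrow> 'a set set \<Rightarrow> bool" where
  "atom_free E r \<M> \<longleftrightarrow> (\<forall>F\<in>\<M>. r F \<noteq> 1)"

definition compatible :: "'a set set \<Rightarrow> 'a set set \<Rightarrow> bool" where
  "compatible \<G> \<M> \<longleftrightarrow> (\<forall>F\<in>\<M>. (\<forall>F'\<in>\<M>. \<not> F' \<subset> F) \<longrightarrow> F \<in> \<G>)"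

definition ext_rank :: "'a set \<Rightarrow> ('a set \<Rightarrow> nat) \<Rightarrow> 'a set set \<Rightarrow> 'a \<Rightarrow> 'a set \<Rightarrow> nat" where
  "ext_rank E r \<M> e S =
     (let T = S \<inter> E in
      if e \<in> S \<and> cl E r T \<notin> \<M> then r T + 1 else r T)"

definition ext_building :: "'a set \<Rightarrow> ('a set \<Rightarrow> nat) \<Rightarrow> 'a set set \<Rightarrow> 'a \<Rightarrow> 'a set set \<Rightarrow> 'a set set" where
  "ext_building E r \<M> e \<G> =
     (\<lambda>G. cl (insert e E) (ext_rank E r \<M> e) G) ` \<G> \<union> {{e}}"

definition trunc_rank :: "'a set \<Rightarrow> ('a set \<Rightarrow> nat) \<Rightarrow> 'a set set \<Rightarrow> 'a set \<Rightarrow> nat" where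
  "trunc_rank E r \<M> S = (if cl E r S \<in> \<M> then r S - 1 else r S)"

definition trunc_building :: "'a set \<Rightarrow> ('a set \<Rightarrow> nat) \<Rightarrow> 'a set set \<Rightarrow> 'a set set \<Rightarrow> 'a set set" where
  "trunc_building E r \<M> \<G> = \<G> \<inter> flats E (trunc_rank E r \<M>)"

definition contract_building :: "'a set \<Rightarrow> ('a set \<Rightarrow> nat) \<Rightarrow> 'a \<Rightarrow> 'a set set \<Rightarrow> 'a set set" where
  "contract_building E' r' e \<G>' =
     {H - {e} | H. (\<exists>G\<in>\<G>'. H = cl E' r' (G \<union> {e})) \<and> H \<noteq> cl E' r' {e}}"

end

(*
  The closure of the truncation Tr_M(M) sends a flat F to F itself, unless F is not in M but has
  a cover in M, in which case it sends F to that (unique) cover. The same operator describes the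
  closures containing e in M \<union>_M e, so (G \<union>_M e)/e is the image of G under this operator.
  Compatibility and atom-freeness make it map G into G: were the cover of some A in G outside G,
  A and a member of M would be distinct factors of that cover (maximal elements of G below it),
  and every factor other than A is an atom. As the operator fixes exactly the flats of Tr_M(M),
  Tr_M(G) is the same image of G.

  For the building-set property, fix a flat F of the truncation. The factors of F are again flats
  of the truncation, and the join in M of truncation flats below them is a truncation flat, so the
  decomposition of [\<emptyset>, F] in M as the product of the intervals below the factors restricts
  to the truncation.
*)
theory Submission
  imports Defs
begin

lemma mem_cl: "z \<in> cl E r S \<longleftrightarrow> z \<in> E \<and> r (insert z S) = r S"
  by (simp add: cl_def)

lemma cl_subset_ground: "cl E r S \<subseteq> E"
  by (auto simp: cl_def)

lemma flat_subset_ground: "flat E r F \<Longrightarrow> F \<subseteq> E"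
  by (simp add: flat_def)

lemma cl_flat: "flat E r F \<Longrightarrow> cl E r F = F"
  by (simp add: flat_def)

lemma mem_flats: "F \<in> flats E r \<longleftrightarrow> flat E r F"
  by (simp add: flats_def)

lemma maxG_memD: "A \<in> maxG \<G> F \<Longrightarrow> A \<in> \<G> \<and> A \<subseteq> F"
  by (simp add: maxG_def)

locale rank_matroid =
  fixes E :: "'a set" and r :: "'a set \<Rightarrow> nat"
  assumes matroid: "matroid E r"
begin

lemma finite_ground: "finite E"
  using matroid by (simp add: matroid_def)

lemma rank_le_card: "X \<subseteq> E \<Longrightarrow> r X \<le> card X"
  using matroid by (simp add: matroid_def)

lemma rank_mono: "X \<subseteq> Y \<Longrightarrow> Y \<subseteq> E \<Longrightarrow> r X \<le> r Y"
  using matroid by (simp add: matroid_def)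

lemma rank_submod: "X \<subseteq> E \<Longrightarrow> Y \<subseteq> E \<Longrightarrow> r (X \<union> Y) + r (X \<inter> Y) \<le> r X + r Y"
  using matroid by (simp add: matroid_def)

lemma rank_empty: "r {} = 0"
  using rank_le_card[of "{}"] by simp

lemma rank_insert_le: assumes "X \<subseteq> E" "x \<in> E" shows "r (insert x X) \<le> r X + 1"
proof -
  have "r (X \<union> {x}) + r (X \<inter> {x}) \<le> r X + r {x}"
    using rank_submod[of X "{x}"] assms by simp
  moreover have "r {x} \<le> 1"
    using rank_le_card[of "{x}"] assms(2) by simp
  ultimately show ?thesis by simp
qed

lemma rank_insert_ge: "X \<subseteq> E \<Longrightarrow> x \<in> E \<Longrightarrow> r X \<le> r (insert x X)"
  by (rule rank_mono) auto

lemma subset_cl: "X \<subseteq> E \<Longrightarrow> X \<subseteq> cl E r X"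
  by (auto simp: cl_def insert_absorb)

lemma rank_Un_subset_cl: assumes "X \<subseteq> E" "Y \<subseteq> cl E r X" shows "r (X \<union> Y) = r X"
proof -
  have "finite Y"
    using assms(2) cl_subset_ground[of E r] finite_ground by (rule finite_subset[OF subset_trans])
  from this assms(2) show ?thesis
  proof (induction Y rule: finite_induct)
    case empty
    then show ?case by simp
  next
    case (insert y Y)
    have y: "y \<in> E" "r (insert y X) = r X" and YE: "Y \<subseteq> E"
      using insert.prems cl_subset_ground[of E r] by (auto simp: cl_def)
    have "r (X \<union> insert y Y) + r ((X \<union> Y) \<inter> insert y X) \<le> r (X \<union> Y) + r (insert y X)"
      using rank_submod[of "X \<union> Y" "insert y X"] assms(1) YE y(1)
      by (simp add: Un_absorb2 sup_commute sup_left_commute)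
    moreover have "r X \<le> r ((X \<union> Y) \<inter> insert y X)" "r X \<le> r (X \<union> insert y Y)"
      using assms(1) YE y(1) by (auto intro: rank_mono)
    ultimately show ?case
      using insert.IH insert.prems y(2) by simp
  qed
qed

lemma rank_cl: "X \<subseteq> E \<Longrightarrow> r (cl E r X) = r X"
  using rank_Un_subset_cl[of X "cl E r X"] subset_cl[of X] by (simp add: Un_absorb1)

lemma cl_mono: assumes "X \<subseteq> Y" "Y \<subseteq> E" shows "cl E r X \<subseteq> cl E r Y"
proof
  fix x assume "x \<in> cl E r X"
  then have x: "x \<in> E" "r (insert x X) = r X" by (auto simp: cl_def)
  have "r (insert x Y) + r (Y \<inter> insert x X) \<le> r Y + r (insert x X)"
    using rank_submod[of Y "insert x X"] assms x(1) by (simp add: Un_absorb2)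
  moreover have "r X \<le> r (Y \<inter> insert x X)" "r Y \<le> r (insert x Y)"
    using assms x(1) by (auto intro: rank_mono)
  ultimately show "x \<in> cl E r Y"
    using x by (simp add: cl_def)
qed

lemma cl_idem: assumes "X \<subseteq> E" shows "cl E r (cl E r X) = cl E r X"
proof
  show "cl E r X \<subseteq> cl E r (cl E r X)"
    by (rule subset_cl[OF cl_subset_ground[of E r]])
  show "cl E r (cl E r X) \<subseteq> cl E r X"
  proof
    fix x assume "x \<in> cl E r (cl E r X)"
    then have x: "x \<in> E" "r (insert x (cl E r X)) = r (cl E r X)" by (auto simp: cl_def)
    have "r (insert x X) \<le> r (insert x (cl E r X))"
      using subset_cl[OF assms] cl_subset_ground[of E r] x(1) by (intro rank_mono) auto
    moreover have "r X \<le> r (insert x X)"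
      using rank_insert_ge assms x(1) by simp
    ultimately show "x \<in> cl E r X"
      using x rank_cl[OF assms] by (simp add: cl_def)
  qed
qed

lemma flat_cl: "X \<subseteq> E \<Longrightarrow> flat E r (cl E r X)"
  using cl_idem cl_subset_ground[of E r] by (simp add: flat_def)

lemma cl_subset_flat: "flat E r F \<Longrightarrow> X \<subseteq> F \<Longrightarrow> cl E r X \<subseteq> F"
  using cl_mono[of X F] by (simp add: flat_def)

lemma flat_Int: assumes "flat E r F" "flat E r H" shows "flat E r (F \<inter> H)"
proof -
  have "cl E r (F \<inter> H) \<subseteq> F \<inter> H"
    using cl_subset_flat[OF assms(1)] cl_subset_flat[OF assms(2)] by blast
  with subset_cl[of "F \<inter> H"] flat_subset_ground[OF assms(1)] show ?thesis
    by (auto simp: flat_def)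
qed

lemma rank_insert_notin_cl:
  assumes "X \<subseteq> E" "x \<in> E" "x \<notin> cl E r X" shows "r (insert x X) = r X + 1"
  using rank_insert_le[OF assms(1,2)] rank_insert_ge[OF assms(1,2)] assms by (simp add: cl_def)

lemma flat_eq_of_rank_le:
  assumes "flat E r K" "flat E r K'" "K \<subseteq> K'" "r K' \<le> r K" shows "K = K'"
proof (rule ccontr)
  assume "K \<noteq> K'"
  then obtain x where x: "x \<in> K'" "x \<notin> K" using assms(3) by blast
  have "r (insert x K) = r K + 1"
    using rank_insert_notin_cl[of K x] assms(1,2) x
    by (auto simp: cl_flat dest: flat_subset_ground)
  moreover have "r (insert x K) \<le> r K'"
    using x assms(2,3) by (intro rank_mono) (auto dest: flat_subset_ground)
  ultimately show False using assms(4) by simp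
qed

lemma rank_cl_insert:
  assumes "flat E r F" "x \<in> E" "x \<notin> F" shows "r (cl E r (insert x F)) = r F + 1"
  using rank_cl[of "insert x F"] rank_insert_notin_cl[of F x] assms
  by (simp add: cl_flat flat_subset_ground)

lemma cl_insert_eq_of_between:
  assumes "flat E r F" "x \<in> E" "x \<notin> F" "flat E r W" "F \<subset> W" "W \<subseteq> cl E r (insert x F)"
  shows "W = cl E r (insert x F)"
proof (rule flat_eq_of_rank_le)
  show "flat E r (cl E r (insert x F))"
    using assms(1,2) by (intro flat_cl) (auto dest: flat_subset_ground)
  obtain y where y: "y \<in> W" "y \<notin> F" using assms(5) by blast
  have "r (insert y F) = r F + 1"
    using rank_insert_notin_cl[of F y] assms(1,4) y
    by (auto simp: cl_flat dest: flat_subset_ground)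
  moreover have "r (insert y F) \<le> r W"
    using y assms(4,5) by (intro rank_mono) (auto dest: flat_subset_ground)
  ultimately show "r (cl E r (insert x F)) \<le> r W"
    using rank_cl_insert[OF assms(1-3)] by simp
qed (use assms in auto)

lemma cl_insert_Int_flat:
  assumes "flat E r D" "flat E r H" "D \<subseteq> H" "x \<in> E" "x \<notin> H"
  shows "cl E r (insert x D) \<inter> H = D"
proof (rule ccontr)
  let ?C = "cl E r (insert x D)"
  have DE: "D \<subseteq> E" by (rule flat_subset_ground[OF assms(1)])
  have "D \<subseteq> ?C" "x \<in> ?C"
    using subset_cl[of "insert x D"] DE assms(4) by auto
  moreover assume "?C \<inter> H \<noteq> D"
  ultimately have "D \<subset> ?C \<inter> H" using assms(3) by blast
  then have "?C \<inter> H = ?C"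
    using cl_insert_eq_of_between[OF assms(1,4) _ flat_Int[OF flat_cl assms(2)]] DE assms(3-5) by blast
  then show False using \<open>x \<in> ?C\<close> assms(5) by blast
qed

lemma cl_insert_cl:
  assumes "X \<subseteq> E" "x \<in> E" shows "cl E r (insert x (cl E r X)) = cl E r (insert x X)"
proof
  show "cl E r (insert x X) \<subseteq> cl E r (insert x (cl E r X))"
    using subset_cl[OF assms(1)] cl_subset_ground[of E r] assms by (intro cl_mono) auto
  have "insert x (cl E r X) \<subseteq> cl E r (insert x X)"
    using subset_cl[of "insert x X"] cl_mono[of X "insert x X"] assms by auto
  then show "cl E r (insert x (cl E r X)) \<subseteq> cl E r (insert x X)"
    using assms by (intro cl_subset_flat flat_cl) auto
qed

lemma cl_insert_mem: assumes "X \<subseteq> E" "x \<in> cl E r X" shows "cl E r (insert x X) = cl E r X"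
proof -
  have "cl E r (insert x X) = cl E r (insert x (cl E r X))"
    using cl_insert_cl[of X x] assms cl_subset_ground[of E r] by auto
  also have "insert x (cl E r X) = cl E r X"
    using assms(2) by blast
  finally show ?thesis
    using cl_idem[OF assms(1)] by simp
qed

end

locale loopless_matroid = rank_matroid +
  assumes loopless: "loopless E r"
begin

lemma rank_singleton: "x \<in> E \<Longrightarrow> r {x} = 1"
  using loopless by (simp add: loopless_def)

lemma cl_empty: "cl E r {} = {}"
  using rank_singleton rank_empty by (auto simp: cl_def)

lemma bot_flat_eq_empty: "bot_flat E r = {}"
  by (simp add: bot_flat_def cl_empty)

lemma flat_empty: "flat E r {}"
  using flat_cl[of "{}"] cl_empty by simp

lemma rank_pos: assumes "flat E r F" "F \<noteq> {}" shows "1 \<le> r F"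
proof -
  obtain x where "x \<in> F" using assms(2) by blast
  moreover have "F \<subseteq> E" by (rule flat_subset_ground[OF assms(1)])
  ultimately have "r {x} \<le> r F" "r {x} = 1"
    using rank_singleton by (auto intro!: rank_mono)
  then show ?thesis by simp
qed

end

locale cut_matroid = loopless_matroid +
  fixes M :: "'a set set"
  assumes modular_cut: "modular_cut E r M"
    and atom_free: "atom_free E r M"
    and empty_notin_cut: "{} \<notin> M"
begin

lemma cut_flat: "F \<in> M \<Longrightarrow> flat E r F"
  using modular_cut by (auto simp: modular_cut_def flats_def)

lemma cut_upward: "F \<in> M \<Longrightarrow> flat E r H \<Longrightarrow> F \<subseteq> H \<Longrightarrow> H \<in> M"
  using modular_cut by (auto simp: modular_cut_def flats_def)

lemma cut_Int_of_modular_pair: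
  "F \<in> M \<Longrightarrow> H \<in> M \<Longrightarrow> r (cl E r (F \<union> H)) + r (F \<inter> H) = r F + r H \<Longrightarrow> F \<inter> H \<in> M"
  using modular_cut by (simp add: modular_cut_def)

lemma cut_rank_ge_2: assumes "F \<in> M" shows "2 \<le> r F"
proof -
  have "1 \<le> r F"
    using rank_pos cut_flat assms empty_notin_cut by blast
  moreover have "r F \<noteq> 1"
    using atom_free assms by (simp add: atom_free_def)
  ultimately show ?thesis by simp
qed

lemma cut_Int_cover:
  assumes "H \<in> M" "flat E r D" "D \<subseteq> H" "x \<in> E" "x \<notin> H" "cl E r (insert x D) \<in> M"
  shows "D \<in> M"
proof -
  define C where "C = cl E r (insert x D)"
  have Hf: "flat E r H" by (rule cut_flat[OF assms(1)])
  have DE: "D \<subseteq> E" and HE: "H \<subseteq> E"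
    using assms(2) Hf by (auto dest: flat_subset_ground)
  have xD: "x \<notin> D" using assms(3,5) by blast
  have Cf: "flat E r C" and xC: "x \<in> C"
    using flat_cl[of "insert x D"] subset_cl[of "insert x D"] DE assms(4) by (auto simp: C_def)
  \<comment> \<open>C and H form a modular pair meeting in D.\<close>
  have CH: "C \<inter> H = D"
    unfolding C_def by (rule cl_insert_Int_flat[OF assms(2) Hf assms(3-5)])
  have "r (C \<union> H) = r H + 1"
  proof (rule antisym)
    have "C \<subseteq> cl E r (insert x H)"
      unfolding C_def by (rule cl_mono) (use assms(3,4) HE in auto)
    then have "C \<union> H \<subseteq> cl E r (insert x H)"
      using subset_cl[of "insert x H"] HE assms(4) by blast
    then have "r (C \<union> H) \<le> r (cl E r (insert x H))"
      by (rule rank_mono[OF _ cl_subset_ground])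
    then show "r (C \<union> H) \<le> r H + 1"
      using rank_cl_insert[OF Hf assms(4,5)] by simp
    have "r (insert x H) \<le> r (C \<union> H)"
      using xC Cf HE by (intro rank_mono) (auto dest: flat_subset_ground)
    then show "r H + 1 \<le> r (C \<union> H)"
      using rank_insert_notin_cl[OF HE assms(4)] cl_flat[OF Hf] assms(5) by simp
  qed
  then have "r (cl E r (C \<union> H)) + r (C \<inter> H) = r C + r H"
    using rank_cl[of "C \<union> H"] Cf HE CH rank_cl_insert[OF assms(2,4) xD]
    by (simp add: C_def flat_subset_ground)
  then show ?thesis
    using cut_Int_of_modular_pair[OF assms(6)[folded C_def] assms(1)] CH by simp
qed

text \<open>The closure of a flat F in the truncation (see cl_trunc_rank): F itself, or the cover of F
  lying in M when F is not in M and such a cover exists (see trunc_cl_cover).\<close>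
definition trunc_cl :: "'a set \<Rightarrow> 'a set" where
  "trunc_cl F = F \<union> {x \<in> E. F \<notin> M \<and> cl E r (insert x F) \<in> M}"

definition trunc_flat :: "'a set \<Rightarrow> bool" where
  "trunc_flat F \<longleftrightarrow> flat E r F \<and> trunc_cl F = F"

lemma mem_trunc_cl: "x \<in> trunc_cl F \<longleftrightarrow> x \<in> F \<or> (x \<in> E \<and> F \<notin> M \<and> cl E r (insert x F) \<in> M)"
  by (auto simp: trunc_cl_def)

lemma subset_trunc_cl: "F \<subseteq> trunc_cl F"
  by (auto simp: trunc_cl_def)

lemma trunc_cl_subset_ground: "F \<subseteq> E \<Longrightarrow> trunc_cl F \<subseteq> E"
  by (auto simp: trunc_cl_def)

lemma trunc_flat_cut: "F \<in> M \<Longrightarrow> trunc_flat F"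
  using cut_flat by (auto simp: trunc_flat_def trunc_cl_def)

lemma trunc_cl_least:
  assumes "trunc_flat H" "flat E r D" "D \<subseteq> H" shows "trunc_cl D \<subseteq> H"
proof
  fix x assume x_cl: "x \<in> trunc_cl D"
  show "x \<in> H"
  proof (rule ccontr)
    assume xH: "x \<notin> H"
    with x_cl assms(3) have x: "x \<in> E" "D \<notin> M" "cl E r (insert x D) \<in> M"
      by (auto simp: mem_trunc_cl)
    have Hf: "flat E r H" and HT: "trunc_cl H = H"
      using assms(1) by (auto simp: trunc_flat_def)
    show False
    proof (cases "H \<in> M")
      case True
      then show False using cut_Int_cover[OF True assms(2,3) x(1) xH x(3)] x(2) by simp
    next
      case False
      have "cl E r (insert x D) \<subseteq> cl E r (insert x H)"
        using assms(3) x(1) flat_subset_ground[OF Hf] by (intro cl_mono) auto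
      then have "cl E r (insert x H) \<in> M"
        using cut_upward[OF x(3) flat_cl] flat_subset_ground[OF Hf] x(1) by blast
      then have "x \<in> trunc_cl H" using False x(1) by (simp add: mem_trunc_cl)
      then show False using xH HT by simp
    qed
  qed
qed

lemma trunc_cl_cover:
  assumes "flat E r F" "F \<notin> M" "x \<in> E" "x \<notin> F" "cl E r (insert x F) \<in> M"
  shows "trunc_cl F = cl E r (insert x F)"
proof
  have FE: "F \<subseteq> E" by (rule flat_subset_ground[OF assms(1)])
  then have F_sub: "F \<subseteq> cl E r (insert x F)"
    using subset_cl[of "insert x F"] assms(3) by blast
  then show "trunc_cl F \<subseteq> cl E r (insert x F)"
    using trunc_cl_least[OF trunc_flat_cut[OF assms(5)] assms(1)] by simp
  show "cl E r (insert x F) \<subseteq> trunc_cl F"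
  proof
    fix z assume z: "z \<in> cl E r (insert x F)"
    show "z \<in> trunc_cl F"
    proof (cases "z \<in> F")
      case False
      have zE: "z \<in> E" using z cl_subset_ground[of E r] by blast
      have "F \<subset> cl E r (insert z F)"
        using subset_cl[of "insert z F"] FE zE False by blast
      moreover have "cl E r (insert z F) \<subseteq> cl E r (insert x F)"
        using z F_sub FE assms(3) by (intro cl_subset_flat flat_cl) auto
      ultimately have "cl E r (insert z F) = cl E r (insert x F)"
        using cl_insert_eq_of_between[OF assms(1,3,4) flat_cl] FE zE by blast
      then show ?thesis using assms(2,5) zE by (simp add: mem_trunc_cl)
    qed (simp add: mem_trunc_cl)
  qed
qed

lemma trunc_cl_neqE:
  assumes "flat E r F" "trunc_cl F \<noteq> F"
  obtains x where "x \<in> E" "x \<notin> F" "F \<notin> M" "cl E r (insert x F) \<in> M"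
    "trunc_cl F = cl E r (insert x F)"
proof -
  obtain x where "x \<in> trunc_cl F" "x \<notin> F"
    using assms(2) subset_trunc_cl by blast
  moreover from this have "x \<in> E" "F \<notin> M" "cl E r (insert x F) \<in> M"
    by (auto simp: mem_trunc_cl)
  ultimately show thesis
    using that trunc_cl_cover[OF assms(1)] by blast
qed

lemma trunc_flat_trunc_cl: assumes "flat E r F" shows "trunc_flat (trunc_cl F)"
proof (cases "trunc_cl F = F")
  case True
  then show ?thesis using assms by (simp add: trunc_flat_def)
next
  case False
  then show ?thesis
    using trunc_cl_neqE[OF assms] trunc_flat_cut by metis
qed

lemma trunc_flat_Int: assumes "trunc_flat H" "trunc_flat A" shows "trunc_flat (H \<inter> A)"
proof -
  have "flat E r (H \<inter> A)"
    using assms flat_Int by (simp add: trunc_flat_def)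
  moreover have "trunc_cl (H \<inter> A) \<subseteq> H \<inter> A"
    using trunc_cl_least[OF assms(1), of "H \<inter> A"] trunc_cl_least[OF assms(2), of "H \<inter> A"]
      calculation by blast
  ultimately show ?thesis
    using subset_trunc_cl[of "H \<inter> A"] unfolding trunc_flat_def by blast
qed

lemma trunc_cl_empty: "trunc_cl {} = {}"
proof -
  have "cl E r {x} \<notin> M" if "x \<in> E" for x
    using cut_rank_ge_2[of "cl E r {x}"] rank_cl[of "{x}"] rank_singleton[OF that] that by auto
  then show ?thesis by (auto simp: trunc_cl_def)
qed

lemma mem_trunc_cl_cl_iff:
  assumes "S \<subseteq> E" "z \<in> E" "z \<notin> cl E r S"
  shows "z \<in> trunc_cl (cl E r S) \<longleftrightarrow> cl E r S \<notin> M \<and> cl E r (insert z S) \<in> M"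
  using cl_insert_cl[OF assms(1,2)] assms(2,3) by (simp add: mem_trunc_cl)

lemma cl_trunc_rank:
  assumes "S \<subseteq> E" shows "cl E (trunc_rank E r M) S = trunc_cl (cl E r S)"
proof (rule set_eqI)
  fix z
  show "z \<in> cl E (trunc_rank E r M) S \<longleftrightarrow> z \<in> trunc_cl (cl E r S)"
  proof (cases "z \<in> E")
    case False
    then show ?thesis
      using trunc_cl_subset_ground[OF cl_subset_ground[of E r]] by (auto simp: mem_cl)
  next
    case zE: True
    show ?thesis
    proof (cases "z \<in> cl E r S")
      case True
      then have "r (insert z S) = r S" "cl E r (insert z S) = cl E r S"
        using cl_insert_mem[OF assms True] by (auto simp: cl_def)
      then show ?thesis
        using True subset_trunc_cl[of "cl E r S"] zE by (auto simp: mem_cl trunc_rank_def)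
    next
      case False
      have "r (insert z S) = r S + 1"
        by (rule rank_insert_notin_cl[OF assms zE False])
      moreover have "cl E r S \<in> M \<Longrightarrow> 2 \<le> r S"
        using cut_rank_ge_2 rank_cl[OF assms] by fastforce
      ultimately have "trunc_rank E r M (insert z S) = trunc_rank E r M S
          \<longleftrightarrow> cl E r S \<notin> M \<and> cl E r (insert z S) \<in> M"
        by (auto simp: trunc_rank_def)
      then show ?thesis
        using mem_trunc_cl_cl_iff[OF assms zE False] zE by (simp add: mem_cl)
    qed
  qed
qed

lemma flats_trunc_rank: "flats E (trunc_rank E r M) = Collect trunc_flat"
proof (intro set_eqI iffI)
  fix H assume "H \<in> flats E (trunc_rank E r M)"
  then have HE: "H \<subseteq> E" and H: "trunc_cl (cl E r H) = H"
    using cl_trunc_rank by (auto simp: mem_flats flat_def)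
  then have "cl E r H = H"
    using subset_cl[OF HE] subset_trunc_cl[of "cl E r H"] by blast
  then show "H \<in> Collect trunc_flat"
    using H HE by (simp add: trunc_flat_def flat_def)
next
  fix H assume "H \<in> Collect trunc_flat"
  then show "H \<in> flats E (trunc_rank E r M)"
    using cl_trunc_rank by (auto simp: trunc_flat_def mem_flats flat_def)
qed

lemma bot_flat_trunc_rank: "bot_flat E (trunc_rank E r M) = {}"
  using cl_trunc_rank[of "{}"] cl_empty trunc_cl_empty by (simp add: bot_flat_def)

lemma ext_rank_ground: "e \<notin> E \<Longrightarrow> X \<subseteq> E \<Longrightarrow> ext_rank E r M e X = r X"
  by (auto simp: ext_rank_def Int_absorb2)

lemma ext_rank_insert:
  "e \<notin> E \<Longrightarrow> X \<subseteq> E \<Longrightarrow>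
    ext_rank E r M e (insert e X) = (if cl E r X \<in> M then r X else r X + 1)"
  by (auto simp: ext_rank_def Int_absorb2 Int_insert_left)

lemma cl_ext_rank_insert:
  assumes "e \<notin> E" "S \<subseteq> E"
  shows "cl (insert e E) (ext_rank E r M e) (insert e S) = insert e (trunc_cl (cl E r S))"
proof (rule set_eqI)
  fix z
  show "z \<in> cl (insert e E) (ext_rank E r M e) (insert e S) \<longleftrightarrow> z \<in> insert e (trunc_cl (cl E r S))"
  proof (cases "z \<in> E")
    case False
    then show ?thesis
      using trunc_cl_subset_ground[OF cl_subset_ground[of E r]] by (auto simp: mem_cl)
  next
    case zE: True
    have ze: "z \<noteq> e" using zE assms(1) by blast
    have rank_z: "ext_rank E r M e (insert z (insert e S)) =
        (if cl E r (insert z S) \<in> M then r (insert z S) else r (insert z S) + 1)"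
      using ext_rank_insert[where X = "insert z S"] assms zE by (simp add: insert_commute)
    show ?thesis
    proof (cases "z \<in> cl E r S")
      case True
      then have "r (insert z S) = r S" "cl E r (insert z S) = cl E r S"
        using cl_insert_mem[OF assms(2) True] by (auto simp: cl_def)
      then show ?thesis
        using rank_z ext_rank_insert[OF assms] True subset_trunc_cl[of "cl E r S"] zE
        by (auto simp: mem_cl)
    next
      case False
      have "r (insert z S) = r S + 1"
        by (rule rank_insert_notin_cl[OF assms(2) zE False])
      then have "ext_rank E r M e (insert z (insert e S)) = ext_rank E r M e (insert e S)
          \<longleftrightarrow> cl E r S \<notin> M \<and> cl E r (insert z S) \<in> M"
        using rank_z ext_rank_insert[OF assms] by auto
      then show ?thesis
        using mem_trunc_cl_cl_iff[OF assms(2) zE False] zE ze by (simp add: mem_cl)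
    qed
  qed
qed

lemma insert_cl_ext_rank_flat:
  assumes "e \<notin> E" "flat E r F"
  shows "insert e (cl (insert e E) (ext_rank E r M e) F) = insert e F"
proof -
  have FE: "F \<subseteq> E" by (rule flat_subset_ground[OF assms(2)])
  have "cl (insert e E) (ext_rank E r M e) F - {e} = cl E r F"
    using ext_rank_ground[OF assms(1)] FE assms(1) by (auto simp: mem_cl)
  then show ?thesis
    using cl_flat[OF assms(2)] by blast
qed

lemma cl_ext_rank_singleton: "e \<notin> E \<Longrightarrow> cl (insert e E) (ext_rank E r M e) {e} = {e}"
  using cl_ext_rank_insert[of e "{}"] cl_empty trunc_cl_empty by simp

lemma cl_ext_rank_Un_singleton:
  assumes "e \<notin> E" "flat E r F"
  shows "cl (insert e E) (ext_rank E r M e) (cl (insert e E) (ext_rank E r M e) F \<union> {e})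
    = insert e (trunc_cl F)"
  using insert_cl_ext_rank_flat[OF assms] cl_ext_rank_insert[OF assms(1) flat_subset_ground[OF assms(2)]]
    cl_flat[OF assms(2)] by simp

end

locale building_matroid = loopless_matroid +
  fixes G :: "'a set set"
  assumes building: "building_set E r G"
begin

lemma building_flat: "A \<in> G \<Longrightarrow> flat E r A"
  using building by (auto simp: building_set_def flats_def)

lemma building_nonempty: "A \<in> G \<Longrightarrow> A \<noteq> {}"
  using building bot_flat_eq_empty by (auto simp: building_set_def)

lemma empty_notin_compatible_cut: "compatible G M \<Longrightarrow> {} \<notin> M"
  using building_nonempty by (auto simp: compatible_def)

lemma finite_building: "finite G"
proof (rule finite_subset)
  show "G \<subseteq> Pow E"
    using building_flat flat_subset_ground by blast
qed (simp add: finite_ground)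

lemma exists_maxG_superset:
  assumes "A \<in> G" "A \<subseteq> F" obtains B where "B \<in> maxG G F" "A \<subseteq> B"
proof -
  let ?S = "{B \<in> G. A \<subseteq> B \<and> B \<subseteq> F}"
  obtain B where B: "B \<in> ?S" "\<And>B'. B' \<in> ?S \<Longrightarrow> B \<subseteq> B' \<Longrightarrow> B = B'"
    using finite_has_maximal[of ?S] finite_building assms by force
  then have "B \<in> maxG G F"
    unfolding maxG_def by (blast dest: psubset_imp_subset)
  with B(1) show thesis using that by blast
qed

abbreviation maxG_product :: "'a set \<Rightarrow> ('a set \<Rightarrow> 'a set) set" where
  "maxG_product F \<equiv> PiE (maxG G F) (\<lambda>A. {H \<in> flats E r. H \<subseteq> A})"

lemma join_map_maxG_iso:
  assumes "flat E r F" "F \<noteq> {}"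
  shows "bij_betw (\<lambda>x. join_map E r x (maxG G F)) (maxG_product F) {H \<in> flats E r. H \<subseteq> F}"
    and "x \<in> maxG_product F \<Longrightarrow> y \<in> maxG_product F \<Longrightarrow>
      (\<forall>A\<in>maxG G F. x A \<subseteq> y A) \<longleftrightarrow> join_map E r x (maxG G F) \<subseteq> join_map E r y (maxG G F)"
proof -
  have F: "F \<in> flats E r" "F \<noteq> bot_flat E r"
    using assms bot_flat_eq_empty by (auto simp: mem_flats)
  have "\<forall>F\<in>flats E r. F \<noteq> bot_flat E r \<longrightarrow> (let I = maxG G F;
      P = PiE I (\<lambda>A. {H \<in> flats E r. H \<subseteq> A})
      in bij_betw (\<lambda>x. join_map E r x I) P {H \<in> flats E r. H \<subseteq> F}
        \<and> (\<forall>x\<in>P. \<forall>y\<in>P. (\<forall>A\<in>I. x A \<subseteq> y A) \<longleftrightarrow> join_map E r x I \<subseteq> join_map E r y I))"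
    using building unfolding building_set_def by (rule conjunct2)
  from bspec[OF this F(1)] F(2)
  have iso: "bij_betw (\<lambda>x. join_map E r x (maxG G F)) (maxG_product F) {H \<in> flats E r. H \<subseteq> F}
    \<and> (\<forall>x\<in>maxG_product F. \<forall>y\<in>maxG_product F.
      (\<forall>A\<in>maxG G F. x A \<subseteq> y A) \<longleftrightarrow> join_map E r x (maxG G F) \<subseteq> join_map E r y (maxG G F))"
    unfolding Let_def by (rule mp)
  then show "bij_betw (\<lambda>x. join_map E r x (maxG G F)) (maxG_product F) {H \<in> flats E r. H \<subseteq> F}"
    by blast
  show "(\<forall>A\<in>maxG G F. x A \<subseteq> y A) \<longleftrightarrow> join_map E r x (maxG G F) \<subseteq> join_map E r y (maxG G F)"
    if "x \<in> maxG_product F" "y \<in> maxG_product F"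
    using iso that by blast
qed

lemma maxG_product_upd:
  assumes "y \<in> maxG_product F" "A \<in> maxG G F" "flat E r W" "W \<subseteq> A"
  shows "y(A := W) \<in> maxG_product F"
proof -
  have "y(A := W) \<in> PiE (insert A (maxG G F)) (\<lambda>A. {H \<in> flats E r. H \<subseteq> A})"
    using assms(1,3,4) by (intro PiE_fun_upd) (auto simp: mem_flats)
  then show ?thesis using assms(2) by (simp add: insert_absorb)
qed

lemma Union_maxG_product_subset:
  assumes "y \<in> maxG_product F" shows "(\<Union>A\<in>maxG G F. y A) \<subseteq> E" "(\<Union>A\<in>maxG G F. y A) \<subseteq> F"
proof -
  have "y A \<subseteq> A" "y A \<subseteq> E" if "A \<in> maxG G F" for A
    using PiE_mem[OF assms that] by (auto simp: mem_flats dest: flat_subset_ground)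
  then show "(\<Union>A\<in>maxG G F. y A) \<subseteq> E" "(\<Union>A\<in>maxG G F. y A) \<subseteq> F"
    using maxG_memD by blast+
qed

lemma flat_join_map: "y \<in> maxG_product F \<Longrightarrow> flat E r (join_map E r y (maxG G F))"
  unfolding join_map_def by (rule flat_cl[OF Union_maxG_product_subset(1)])

lemma join_map_subset_flat:
  "flat E r F \<Longrightarrow> y \<in> maxG_product F \<Longrightarrow> join_map E r y (maxG G F) \<subseteq> F"
  unfolding join_map_def by (rule cl_subset_flat[OF _ Union_maxG_product_subset(2)])

lemma subset_join_map:
  assumes "y \<in> maxG_product F" "A \<in> maxG G F" shows "y A \<subseteq> join_map E r y (maxG G F)"
  using subset_cl[OF Union_maxG_product_subset(1)[OF assms(1)]] assms(2)
  unfolding join_map_def by blast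

lemma join_map_Int_maxG:
  assumes "flat E r F" "F \<noteq> {}" "y \<in> maxG_product F" "A \<in> maxG G F"
  shows "join_map E r y (maxG G F) \<inter> A = y A"
proof
  let ?J = "join_map E r y (maxG G F)"
  define z where "z = y(A := ?J \<inter> A)"
  have z: "z \<in> maxG_product F"
    unfolding z_def
    using flat_Int[OF flat_join_map[OF assms(3)] building_flat] maxG_memD[OF assms(4)]
    by (intro maxG_product_upd[OF assms(3,4)]) auto
  have "(\<Union>B\<in>maxG G F. z B) \<subseteq> ?J"
    using subset_join_map[OF assms(3)] by (auto simp: z_def)
  then have "join_map E r z (maxG G F) \<subseteq> ?J"
    unfolding join_map_def[of E r z] by (rule cl_subset_flat[OF flat_join_map[OF assms(3)]])
  then have "z A \<subseteq> y A"
    using join_map_maxG_iso(2)[OF assms(1,2) z assms(3)] assms(4) by blast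
  then show "?J \<inter> A \<subseteq> y A" by (simp add: z_def)
  show "y A \<subseteq> ?J \<inter> A"
    using subset_join_map[OF assms(3,4)] PiE_mem[OF assms(3,4)] by blast
qed

lemma join_map_restrict_Int:
  assumes "flat E r F" "F \<noteq> {}" "flat E r H" "H \<subseteq> F"
  shows "join_map E r (\<lambda>B\<in>maxG G F. H \<inter> B) (maxG G F) = H"
proof -
  have "H \<in> (\<lambda>x. join_map E r x (maxG G F)) ` maxG_product F"
    using join_map_maxG_iso(1)[OF assms(1,2)] assms(3,4) by (simp add: bij_betw_def mem_flats)
  then obtain x where x: "x \<in> maxG_product F" "H = join_map E r x (maxG G F)"
    by blast
  have "x = (\<lambda>B\<in>maxG G F. H \<inter> B)"
  proof
    fix B
    show "x B = (\<lambda>B\<in>maxG G F. H \<inter> B) B"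
      using join_map_Int_maxG[OF assms(1,2) x(1), of B] x PiE_arb[OF x(1), of B]
      by (cases "B \<in> maxG G F") auto
  qed
  then show ?thesis using x(2) by simp
qed

lemma maxG_disjoint:
  assumes "flat E r F" "F \<noteq> {}" "A \<in> maxG G F" "B \<in> maxG G F" "A \<noteq> B"
  shows "A \<inter> B = {}"
proof -
  define y where "y = (\<lambda>C\<in>maxG G F. if C = B then B else {})"
  have y: "y \<in> maxG_product F"
    using flat_empty building_flat maxG_memD[OF assms(4)] by (auto simp: y_def mem_flats)
  have "(\<Union>C\<in>maxG G F. y C) = B"
    using assms(4) by (auto simp: y_def split: if_splits)
  then have "join_map E r y (maxG G F) = B"
    using cl_flat[OF building_flat] maxG_memD[OF assms(4)] by (simp add: join_map_def)
  then show ?thesis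
    using join_map_Int_maxG[OF assms(1,2) y assms(3)] assms(5) by (auto simp: y_def assms(3))
qed

lemma maxG_cl_insert:
  assumes "A \<in> G" "x \<in> E" "x \<notin> A" "cl E r (insert x A) \<notin> G"
  shows "A \<in> maxG G (cl E r (insert x A))"
proof -
  have Af: "flat E r A" by (rule building_flat[OF assms(1)])
  have "A \<subseteq> cl E r (insert x A)"
    using subset_cl[of "insert x A"] flat_subset_ground[OF Af] assms(2) by auto
  then obtain B where B: "B \<in> maxG G (cl E r (insert x A))" "A \<subseteq> B"
    using exists_maxG_superset[OF assms(1)] by blast
  have "B = A"
  proof (rule ccontr)
    assume "B \<noteq> A"
    then have "B = cl E r (insert x A)"
      using cl_insert_eq_of_between[OF Af assms(2,3) building_flat] B maxG_memD[OF B(1)] by auto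
    then show False using maxG_memD[OF B(1)] assms(4) by simp
  qed
  then show ?thesis using B(1) by simp
qed

lemma maxG_cover_Int:
  assumes "flat E r A" "x \<in> E" "x \<notin> A"
    and "A \<in> maxG G (cl E r (insert x A))" "B \<in> maxG G (cl E r (insert x A))" "A \<noteq> B"
    and "flat E r X" "X \<subseteq> B" "X \<noteq> {}"
  shows "cl E r (insert x A) \<inter> B = X"
proof -
  define F where "F = cl E r (insert x A)"
  have AE: "A \<subseteq> E" by (rule flat_subset_ground[OF assms(1)])
  have Ff: "flat E r F" and AF: "A \<subseteq> F" and xF: "x \<in> F"
    using flat_cl[of "insert x A"] subset_cl[of "insert x A"] AE assms(2) by (auto simp: F_def)
  have A: "A \<in> maxG G F" and B: "B \<in> maxG G F" "B \<subseteq> F"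
    using assms(4,5) maxG_memD[OF assms(5)] by (simp_all add: F_def)
  have disj: "A \<inter> B = {}"
    using maxG_disjoint[OF Ff _ A B(1) assms(6)] xF by blast
  define y where "y = (\<lambda>C\<in>maxG G F. if C = B then X else if C = A then A else {})"
  have y: "y \<in> maxG_product F"
    using assms(1,7,8) flat_empty by (auto simp: y_def mem_flats)
  have XAE: "X \<union> A \<subseteq> E"
    using assms(7) AE by (auto dest: flat_subset_ground)
  have "(\<Union>C\<in>maxG G F. y C) = X \<union> A"
    using A B(1) assms(6) by (auto simp: y_def split: if_splits)
  moreover have "cl E r (X \<union> A) = F"
  proof -
    have "A \<subset> cl E r (X \<union> A)"
      using subset_cl[OF XAE] assms(8,9) disj by blast
    moreover have "cl E r (X \<union> A) \<subseteq> F"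
      using assms(8) B(2) AF by (intro cl_subset_flat[OF Ff]) auto
    ultimately show ?thesis
      using cl_insert_eq_of_between[OF assms(1-3) flat_cl[OF XAE]] by (simp add: F_def)
  qed
  ultimately have "join_map E r y (maxG G F) = F"
    by (simp add: join_map_def)
  then have "F \<inter> B = X"
    using join_map_Int_maxG[OF Ff _ y B(1)] xF B(1) by (auto simp: y_def)
  then show ?thesis by (simp add: F_def)
qed

lemma maxG_cover_rank_one:
  assumes "flat E r A" "x \<in> E" "x \<notin> A"
    and "A \<in> maxG G (cl E r (insert x A))" "B \<in> maxG G (cl E r (insert x A))" "A \<noteq> B"
  shows "r B = 1"
proof -
  have B: "B \<in> G" "flat E r B" "B \<noteq> {}"
    using maxG_memD[OF assms(5)] building_flat building_nonempty by auto
  then obtain b where b: "b \<in> B" "b \<in> E"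
    using flat_subset_ground by blast
  have "cl E r {b} = cl E r (insert x A) \<inter> B"
    using maxG_cover_Int[OF assms, of "cl E r {b}"] flat_cl[of "{b}"] subset_cl[of "{b}"]
      cl_subset_flat[OF B(2), of "{b}"] b by auto
  also have "\<dots> = B"
    using maxG_cover_Int[OF assms B(2) order_refl B(3)] .
  finally show ?thesis
    using rank_cl[of "{b}"] rank_singleton b by auto
qed

lemma join_map_cover_Int_maxG:
  fixes y :: "'a set \<Rightarrow> 'a set" and F :: "'a set"
  defines "K \<equiv> join_map E r y (maxG G F)"
  assumes "flat E r F" "F \<noteq> {}" "y \<in> maxG_product F" "A \<in> maxG G F"
    and "x\<^sub>0 \<in> E" "x\<^sub>0 \<notin> K" "cl E r (insert x\<^sub>0 K) \<subseteq> F"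
    and "x \<in> cl E r (insert x\<^sub>0 K) \<inter> A" "x \<notin> y A"
  shows "cl E r (insert x\<^sub>0 K) \<inter> A = cl E r (insert x (y A))"
proof -
  define K' where "K' = cl E r (insert x\<^sub>0 K)"
  define W where "W = cl E r (insert x (y A))"
  have Kf: "flat E r K" unfolding K_def by (rule flat_join_map[OF assms(4)])
  have KE: "K \<subseteq> E" by (rule flat_subset_ground[OF Kf])
  have K'f: "flat E r K'" and KK': "K \<subseteq> K'"
    using flat_cl[of "insert x\<^sub>0 K"] subset_cl[of "insert x\<^sub>0 K"] KE assms(6) by (auto simp: K'_def)
  have Af: "flat E r A" using building_flat maxG_memD[OF assms(5)] by blast
  have yA: "flat E r (y A)" "y A \<subseteq> A" "y A \<subseteq> K"
    using PiE_mem[OF assms(4,5)] subset_join_map[OF assms(4,5)] by (auto simp: mem_flats K_def)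
  have xE: "x \<in> E" using assms(9) cl_subset_ground[of E r] by blast
  have yAE: "insert x (y A) \<subseteq> E" using yA(1) xE by (auto dest: flat_subset_ground)
  have Wf: "flat E r W" and xW: "x \<in> W" and yW: "y A \<subseteq> W"
    using flat_cl[OF yAE] subset_cl[OF yAE] by (auto simp: W_def)
  have WK'A: "W \<subseteq> K' \<inter> A"
    unfolding W_def using assms(9) yA KK' by (intro cl_subset_flat flat_Int K'f Af) (auto simp: K'_def)
  define w where "w = y(A := W)"
  have w: "w \<in> maxG_product F"
    unfolding w_def using WK'A by (intro maxG_product_upd[OF assms(4,5) Wf]) auto
  let ?Jw = "join_map E r w (maxG G F)"
  have "(\<Union>B\<in>maxG G F. w B) \<subseteq> K'"
    using WK'A subset_join_map[OF assms(4)] KK' by (auto simp: w_def K_def)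
  then have "?Jw \<subseteq> K'"
    unfolding join_map_def[of E r w] by (rule cl_subset_flat[OF K'f])
  moreover have "K \<subseteq> ?Jw"
    using yW Union_maxG_product_subset(1)[OF w]
    unfolding K_def join_map_def by (intro cl_mono) (auto simp: w_def)
  moreover have "x \<in> ?Jw" "x \<notin> K"
    using subset_join_map[OF w assms(5)] xW join_map_Int_maxG[OF assms(2,3,4,5)] assms(9,10)
    by (auto simp: w_def K_def)
  ultimately have "?Jw = K'"
    using cl_insert_eq_of_between[OF Kf assms(6,7) flat_join_map[OF w]] by (auto simp: K'_def)
  then show ?thesis
    using join_map_Int_maxG[OF assms(2,3) w assms(5)] by (simp add: w_def K'_def W_def)
qed

end

locale building_cut_matroid = cut_matroid E r M + building_matroid E r G
  for E :: "'a set" and r M G +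
  assumes compatible: "compatible G M"
begin

abbreviation trunc_maxG_product :: "'a set \<Rightarrow> ('a set \<Rightarrow> 'a set) set" where
  "trunc_maxG_product F \<equiv> PiE (maxG G F) (\<lambda>A. {H. trunc_flat H \<and> H \<subseteq> A})"

lemma trunc_maxG_product_subset: "trunc_maxG_product F \<subseteq> maxG_product F"
  by (auto simp: PiE_iff trunc_flat_def mem_flats)

lemma cut_obtain_maxG:
  assumes "K \<in> M" "K \<subseteq> F" obtains A where "A \<in> maxG G F" "K \<inter> A \<in> M"
proof -
  let ?S = "{N \<in> M. N \<subseteq> K}"
  have "finite ?S"
    using finite_subset[of ?S "Pow E"] cut_flat finite_ground by (auto dest: flat_subset_ground)
  then obtain N where N: "N \<in> ?S" "\<And>N'. N' \<in> ?S \<Longrightarrow> N' \<subseteq> N \<Longrightarrow> N = N'"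
    using finite_has_minimal[of ?S] assms(1) by force
  have "\<forall>N'\<in>M. \<not> N' \<subset> N"
    using N by blast
  then have "N \<in> G"
    using compatible N(1) by (simp add: compatible_def)
  then obtain A where A: "A \<in> maxG G F" "N \<subseteq> A"
    using exists_maxG_superset N(1) assms(2) by blast
  have "K \<inter> A \<in> M"
    using cut_upward[OF _ flat_Int[OF cut_flat[OF assms(1)] building_flat]] N(1) A
    by (auto dest: maxG_memD)
  with A(1) show thesis using that by blast
qed

lemma trunc_cl_building: assumes "A \<in> G" shows "trunc_cl A \<in> G"
proof (rule ccontr)
  \<comment> \<open>Otherwise A is a factor of its cover trunc_cl A, and compatibility supplies a second
    factor lying in M; but any second factor of a cover of A is an atom.\<close>
  assume not_G: "trunc_cl A \<notin> G"
  have Af: "flat E r A" by (rule building_flat[OF assms])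
  have "trunc_cl A \<noteq> A" using assms not_G by auto
  then obtain x where x: "x \<in> E" "x \<notin> A" "A \<notin> M" "cl E r (insert x A) \<in> M"
    and T: "trunc_cl A = cl E r (insert x A)"
    using trunc_cl_neqE[OF Af] by blast
  have A_max: "A \<in> maxG G (cl E r (insert x A))"
    using maxG_cl_insert[OF assms x(1,2)] not_G T by simp
  obtain B where B: "B \<in> maxG G (cl E r (insert x A))" "cl E r (insert x A) \<inter> B \<in> M"
    using cut_obtain_maxG[OF x(4) order_refl] .
  then have "B \<in> M"
    using maxG_memD[OF B(1)] by (simp add: Int_absorb1)
  then have "r B = 1"
    using maxG_cover_rank_one[OF Af x(1,2) A_max B(1)] x(3) by auto
  then show False
    using \<open>B \<in> M\<close> atom_free by (simp add: atom_free_def)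
qed

lemma trunc_flat_maxG: assumes "trunc_flat F" "A \<in> maxG G F" shows "trunc_flat A"
proof -
  have A: "A \<in> G" "A \<subseteq> F" "\<not> (\<exists>G'\<in>G. G' \<subseteq> F \<and> A \<subset> G')"
    using assms(2) by (auto simp: maxG_def)
  have Af: "flat E r A" by (rule building_flat[OF A(1)])
  have "trunc_cl A \<in> G" "trunc_cl A \<subseteq> F" "A \<subseteq> trunc_cl A"
    using trunc_cl_building[OF A(1)] trunc_cl_least[OF assms(1) Af A(2)] subset_trunc_cl by auto
  then have "trunc_cl A = A" using A(3) by blast
  then show ?thesis using Af by (simp add: trunc_flat_def)
qed

lemma maxG_trunc_flat: assumes "trunc_flat F" shows "maxG {A \<in> G. trunc_flat A} F = maxG G F"
proof (intro set_eqI iffI)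
  fix B assume "B \<in> maxG G F"
  then show "B \<in> maxG {A \<in> G. trunc_flat A} F"
    using trunc_flat_maxG[OF assms] by (auto simp: maxG_def)
next
  fix B assume B_max: "B \<in> maxG {A \<in> G. trunc_flat A} F"
  then have B: "B \<in> G" "B \<subseteq> F" by (auto simp: maxG_def)
  obtain A where A: "A \<in> maxG G F" "B \<subseteq> A"
    using exists_maxG_superset[OF B] .
  have "trunc_flat A" "A \<in> G" "A \<subseteq> F"
    using trunc_flat_maxG[OF assms A(1)] maxG_memD[OF A(1)] by auto
  then have "B = A" using B_max A(2) by (auto simp: maxG_def)
  then show "B \<in> maxG G F" using A(1) by simp
qed

lemma trunc_flat_join_map:
  assumes "trunc_flat F" "F \<noteq> {}" "y \<in> trunc_maxG_product F"
  shows "trunc_flat (join_map E r y (maxG G F))"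
proof (rule ccontr)
  \<comment> \<open>Otherwise the join K has a cover K' in M below F. Some factor A meets K' in a member of M,
    and this meet is a cover of the component y A, so y A is not closed in the truncation.\<close>
  define K where "K = join_map E r y (maxG G F)"
  have Ff: "flat E r F" using assms(1) by (simp add: trunc_flat_def)
  have y: "y \<in> maxG_product F"
    using assms(3) trunc_maxG_product_subset by blast
  have Kf: "flat E r K" and KF: "K \<subseteq> F"
    using flat_join_map[OF y] join_map_subset_flat[OF Ff y] by (simp_all add: K_def)
  assume "\<not> trunc_flat (join_map E r y (maxG G F))"
  then have "trunc_cl K \<noteq> K" using Kf by (simp add: trunc_flat_def K_def)
  then obtain x\<^sub>0 where x\<^sub>0: "x\<^sub>0 \<in> E" "x\<^sub>0 \<notin> K" "K \<notin> M" "cl E r (insert x\<^sub>0 K) \<in> M"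
    and T: "trunc_cl K = cl E r (insert x\<^sub>0 K)"
    using trunc_cl_neqE[OF Kf] by blast
  define K' where "K' = cl E r (insert x\<^sub>0 K)"
  have K'F: "K' \<subseteq> F"
    using trunc_cl_least[OF assms(1) Kf KF] T by (simp add: K'_def)
  have KK': "K \<subseteq> K'"
    using subset_cl[of "insert x\<^sub>0 K"] flat_subset_ground[OF Kf] x\<^sub>0(1) by (auto simp: K'_def)
  obtain A where A: "A \<in> maxG G F" "K' \<inter> A \<in> M"
    using cut_obtain_maxG[OF _ K'F] x\<^sub>0(4) by (auto simp: K'_def)
  have yA: "trunc_flat (y A)" "y A \<subseteq> K" "y A \<subseteq> A"
    using PiE_mem[OF assms(3) A(1)] subset_join_map[OF y A(1)] by (auto simp: K_def)
  have "y A \<notin> M"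
    using cut_upward[OF _ Kf yA(2)] x\<^sub>0(3) by blast
  then have "y A \<noteq> K' \<inter> A"
    using A(2) by auto
  then obtain x where x: "x \<in> K' \<inter> A" "x \<notin> y A"
    using yA(2,3) KK' by blast
  have "K' \<inter> A = cl E r (insert x (y A))"
    using join_map_cover_Int_maxG[OF Ff assms(2) y A(1) x\<^sub>0(1) _ _ _ x(2)] x(1) x\<^sub>0(2) K'F
    by (simp add: K_def K'_def)
  then have "x \<in> trunc_cl (y A)"
    using A(2) \<open>y A \<notin> M\<close> x(1) cl_subset_ground[of E r] by (auto simp: mem_trunc_cl)
  then show False
    using yA(1) x(2) by (simp add: trunc_flat_def)
qed

lemma trunc_building_eq: "trunc_building E r M G = {A \<in> G. trunc_flat A}"
  by (auto simp: trunc_building_def flats_trunc_rank)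

lemma trunc_building_eq_image: "trunc_building E r M G = trunc_cl ` G"
proof
  show "trunc_building E r M G \<subseteq> trunc_cl ` G"
    by (force simp: trunc_building_eq trunc_flat_def)
  show "trunc_cl ` G \<subseteq> trunc_building E r M G"
    using trunc_cl_building trunc_flat_trunc_cl building_flat by (auto simp: trunc_building_eq)
qed

lemma trunc_maxG_product_eq:
  "PiE (maxG G F) (\<lambda>A. {H \<in> flats E (trunc_rank E r M). H \<subseteq> A}) = trunc_maxG_product F"
  by (simp add: flats_trunc_rank)

lemma join_map_trunc_rank:
  assumes "trunc_flat F" "F \<noteq> {}" "y \<in> trunc_maxG_product F"
  shows "join_map E (trunc_rank E r M) y (maxG G F) = join_map E r y (maxG G F)"
proof -
  have "y \<in> maxG_product F"
    using assms(3) trunc_maxG_product_subset by blast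
  then show ?thesis
    using cl_trunc_rank[OF Union_maxG_product_subset(1)] trunc_flat_join_map[OF assms]
    by (simp add: join_map_def trunc_flat_def)
qed

lemma join_map_image_trunc_flat:
  assumes "trunc_flat F" "F \<noteq> {}"
  shows "(\<lambda>x. join_map E r x (maxG G F)) ` trunc_maxG_product F = {H. trunc_flat H \<and> H \<subseteq> F}"
proof -
  have Ff: "flat E r F" using assms(1) by (simp add: trunc_flat_def)
  show ?thesis
  proof (intro set_eqI iffI)
    fix H assume "H \<in> (\<lambda>x. join_map E r x (maxG G F)) ` trunc_maxG_product F"
    then obtain x where x: "x \<in> trunc_maxG_product F" "H = join_map E r x (maxG G F)"
      by blast
    then show "H \<in> {H. trunc_flat H \<and> H \<subseteq> F}"
      using trunc_flat_join_map[OF assms x(1)] join_map_subset_flat[OF Ff]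
        trunc_maxG_product_subset by blast
  next
    fix H assume H: "H \<in> {H. trunc_flat H \<and> H \<subseteq> F}"
    define x where "x = (\<lambda>B\<in>maxG G F. H \<inter> B)"
    have "H = join_map E r x (maxG G F)"
      using join_map_restrict_Int[OF Ff assms(2)] H by (simp add: trunc_flat_def x_def)
    moreover have "x \<in> trunc_maxG_product F"
      using H trunc_flat_Int trunc_flat_maxG[OF assms(1)] by (auto simp: x_def)
    ultimately show "H \<in> (\<lambda>x. join_map E r x (maxG G F)) ` trunc_maxG_product F"
      by (rule image_eqI)
  qed
qed

lemma join_map_trunc_rank_iso:
  assumes "trunc_flat F" "F \<noteq> {}"
  defines "Q \<equiv> PiE (maxG G F) (\<lambda>A. {H \<in> flats E (trunc_rank E r M). H \<subseteq> A})"
  shows "bij_betw (\<lambda>x. join_map E (trunc_rank E r M) x (maxG G F)) Q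
      {H \<in> flats E (trunc_rank E r M). H \<subseteq> F}"
    and "x \<in> Q \<Longrightarrow> y \<in> Q \<Longrightarrow> (\<forall>A\<in>maxG G F. x A \<subseteq> y A) \<longleftrightarrow>
      join_map E (trunc_rank E r M) x (maxG G F) \<subseteq> join_map E (trunc_rank E r M) y (maxG G F)"
proof -
  have Ff: "flat E r F" using assms(1) by (simp add: trunc_flat_def)
  have Q_eq: "Q = trunc_maxG_product F"
    unfolding Q_def by (rule trunc_maxG_product_eq)
  have QP: "Q \<subseteq> maxG_product F"
    unfolding Q_eq by (rule trunc_maxG_product_subset)
  have join_eq: "join_map E (trunc_rank E r M) x (maxG G F) = join_map E r x (maxG G F)"
    if "x \<in> Q" for x
    using join_map_trunc_rank[OF assms(1,2)] that by (simp add: Q_eq)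
  have "bij_betw (\<lambda>x. join_map E r x (maxG G F)) Q {H \<in> flats E (trunc_rank E r M). H \<subseteq> F}"
    using bij_betw_subset[OF join_map_maxG_iso(1)[OF Ff assms(2)] QP]
      join_map_image_trunc_flat[OF assms(1,2)] by (simp add: Q_eq flats_trunc_rank)
  then show "bij_betw (\<lambda>x. join_map E (trunc_rank E r M) x (maxG G F)) Q
      {H \<in> flats E (trunc_rank E r M). H \<subseteq> F}"
    using bij_betw_cong[of Q "\<lambda>x. join_map E (trunc_rank E r M) x (maxG G F)"
        "\<lambda>x. join_map E r x (maxG G F)"] join_eq by simp
  show "(\<forall>A\<in>maxG G F. x A \<subseteq> y A) \<longleftrightarrow>
      join_map E (trunc_rank E r M) x (maxG G F) \<subseteq> join_map E (trunc_rank E r M) y (maxG G F)"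
    if "x \<in> Q" "y \<in> Q"
  proof -
    have "x \<in> maxG_product F" "y \<in> maxG_product F"
      using QP that by blast+
    then show ?thesis
      using join_map_maxG_iso(2)[OF Ff assms(2)] join_eq[OF that(1)] join_eq[OF that(2)] by simp
  qed
qed

lemma building_set_trunc_rank: "building_set E (trunc_rank E r M) (trunc_building E r M G)"
  unfolding building_set_def Let_def
proof (intro conjI ballI impI)
  show "trunc_building E r M G \<subseteq> flats E (trunc_rank E r M) - {bot_flat E (trunc_rank E r M)}"
    using building_nonempty by (auto simp: trunc_building_def bot_flat_trunc_rank)
  fix F assume F: "F \<in> flats E (trunc_rank E r M)" "F \<noteq> bot_flat E (trunc_rank E r M)"
  then have Ft: "trunc_flat F" and Fne: "F \<noteq> {}"
    by (simp_all add: flats_trunc_rank bot_flat_trunc_rank)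
  let ?I = "maxG (trunc_building E r M G) F"
  let ?Q = "PiE ?I (\<lambda>A. {H \<in> flats E (trunc_rank E r M). H \<subseteq> A})"
  have I: "?I = maxG G F"
    using maxG_trunc_flat[OF Ft] by (simp add: trunc_building_eq)
  show "bij_betw (\<lambda>x. join_map E (trunc_rank E r M) x ?I) ?Q {H \<in> flats E (trunc_rank E r M). H \<subseteq> F}"
    unfolding I by (rule join_map_trunc_rank_iso(1)[OF Ft Fne])
  show "(\<forall>A\<in>?I. x A \<subseteq> y A) \<longleftrightarrow>
      join_map E (trunc_rank E r M) x ?I \<subseteq> join_map E (trunc_rank E r M) y ?I"
    if "x \<in> ?Q" "y \<in> ?Q" for x y
    using that unfolding I by (rule join_map_trunc_rank_iso(2)[OF Ft Fne])
qed

lemma contract_ext_building: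
  assumes "e \<notin> E"
  shows "contract_building (insert e E) (ext_rank E r M e) e (ext_building E r M e G) = trunc_cl ` G"
proof -
  let ?cl = "cl (insert e E) (ext_rank E r M e)"
  have cl_e: "?cl {e} = {e}"
    by (rule cl_ext_rank_singleton[OF assms])
  have cl_G: "?cl (?cl A \<union> {e}) = insert e (trunc_cl A)" if "A \<in> G" for A
    using cl_ext_rank_Un_singleton[OF assms building_flat[OF that]] .
  have e_notin: "e \<notin> trunc_cl A" and ne: "trunc_cl A \<noteq> {}" if "A \<in> G" for A
    using trunc_cl_subset_ground[OF flat_subset_ground[OF building_flat[OF that]]] assms
      subset_trunc_cl[of A] building_nonempty[OF that] by auto
  show ?thesis
  proof (intro set_eqI iffI)
    fix X assume "X \<in> contract_building (insert e E) (ext_rank E r M e) e (ext_building E r M e G)"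
    then obtain H G' where X: "X = H - {e}" "G' \<in> ?cl ` G \<union> {{e}}" "H = ?cl (G' \<union> {e})"
      "H \<noteq> ?cl {e}"
      unfolding contract_building_def ext_building_def by blast
    then obtain A where "A \<in> G" "G' = ?cl A"
      by auto
    then show "X \<in> trunc_cl ` G"
      using X cl_G e_notin by auto
  next
    fix X assume "X \<in> trunc_cl ` G"
    then obtain A where A: "A \<in> G" "X = trunc_cl A" by blast
    have "?cl A \<in> ?cl ` G \<union> {{e}}" "insert e (trunc_cl A) = ?cl (?cl A \<union> {e})"
      "X = insert e (trunc_cl A) - {e}"
      using A cl_G e_notin by auto
    moreover have "insert e (trunc_cl A) \<noteq> {e}"
      using e_notin[OF A(1)] ne[OF A(1)] by blast
    then have "insert e (trunc_cl A) \<noteq> ?cl {e}"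
      by (simp add: cl_e)
    ultimately show "X \<in> contract_building (insert e E) (ext_rank E r M e) e (ext_building E r M e G)"
      unfolding contract_building_def ext_building_def by blast
  qed
qed

end

theorem lemma2p33:
  fixes E :: "'a set" and r :: "'a set \<Rightarrow> nat" and \<G> \<M> :: "'a set set" and e :: 'a
  assumes "matroid E r" and "loopless E r"
    and "building_set E r \<G>"
    and "modular_cut E r \<M>" and "atom_free E r \<M>" and "compatible \<G> \<M>"
    and "e \<notin> E"
  shows "trunc_building E r \<M> \<G> =
           contract_building (insert e E) (ext_rank E r \<M> e) e (ext_building E r \<M> e \<G>)
         \<and> building_set E (trunc_rank E r \<M>) (trunc_building E r \<M> \<G>)"
proof -
  interpret building_matroid E r \<G>
    using assms by unfold_locales
  interpret building_cut_matroid E r \<M> \<G>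
    using assms empty_notin_compatible_cut by unfold_locales
  show ?thesis
    using trunc_building_eq_image contract_ext_building[OF assms(7)] building_set_trunc_rank
    by simp
qed

end
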